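(* Fix $a\ge0$ and $0\le\alpha\le\beta$. There is a constant $M_a^{\alpha,\beta}>0$, independent of $n$, $x$ and $f$, such that for every $f\in C_\rho^k[0,\infty)$ and every integer $n\ge1$, $$\sup_{x\ge0}\frac{|T_{n,a}^{\alpha,\beta}(f;x)-f(x)|}{(1+x^2)^3}\le M_a^{\alpha,\beta}\,\Omega\!\left(f;(n+\beta)^{-1/2}\right).$$
   Context: Fix $a\ge 0$ and real numbers $\alpha,\beta$ with $0\le\alpha\le\beta$. For $n\in\mathbb N=\{1,2,\dots\}$ let $(n)_0=1$, $(n)_i=n(n+1)\cdots(n+i-1)$, and $p_k(n,a)=\sum_{i=0}^{k}\binom{k}{i}(n)_i a^{k-i}$. For $x\ge0$ and $k=0,1,2,\dots$ put $W_{n,k}^a(x)=e^{-\frac{ax}{1+x}}\frac{p_k(n,a)}{k!}\frac{x^k}{(1+x)^{k+n}}$ (so that $\sum_{k\ge0}W_{n,k}^a(x)=1$). The generalized Baskakov–Kantorovich–Stancu operator is $T_{n,a}^{\alpha,\beta}(f;x)=(n+\beta)\sum_{k=0}^{\infty}W_{n,k}^a(x)\int_{\frac{k+\alpha}{n+\beta}}^{\frac{k+\alpha+1}{n+\beta}}f(t)\,dt$. With the weight $\rho(x)=1+x^2$: $C_\rho[0,\infty)$ is the set of continuous $f$ on $[0,\infty)$ with $|f(x)|\le M_f\rho(x)$ for some constant $M_f$, and $C_\rho^k[0,\infty)$ is the set of $f\in C_\rho[0,\infty)$ for which $\lim_{x\to\infty}f(x)/\rho(x)$ exists and is finite. The weighted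 modulus of continuity (Ispir) is, for $\delta>0$, $\Omega(f;\delta)=\sup\left\{\frac{|f(x+h)-f(x)|}{(1+h^2)(1+x^2)}: x\ge0,\ |h|\le\delta,\ x+h\ge0\right\}$. *)

theory Defs
  imports "HOL-Analysis.Analysis"
begin

definition p_poly :: "nat \<Rightarrow> nat \<Rightarrow> real \<Rightarrow> real" where
  "p_poly k n a = (\<Sum>i=0..k. real (k choose i) * pochhammer (real n) i * a ^ (k - i))"

definition W_basis :: "nat \<Rightarrow> nat \<Rightarrow> real \<Rightarrow> real \<Rightarrow> real" where
  "W_basis n k a x = exp (- (a * x / (1 + x))) * (p_poly k n a / fact k)
       * (x ^ k / (1 + x) ^ (k + n))"

definition T_op :: "nat \<Rightarrow> real \<Rightarrow> real \<Rightarrow> real \<Rightarrow> (real \<Rightarrow> real) \<Rightarrow> real \<Rightarrow> real" where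
  "T_op n a \<alpha> \<beta> f x = (real n + \<beta>) *
     (\<Sum>k. W_basis n k a x *
        integral {(real k + \<alpha>) / (real n + \<beta>) .. (real k + \<alpha> + 1) / (real n + \<beta>)} f)"

definition rho :: "real \<Rightarrow> real" where
  "rho x = 1 + x\<^sup>2"

definition C_rho :: "(real \<Rightarrow> real) set" where
  "C_rho = {f. continuous_on {0..} f \<and> (\<exists>M. \<forall>x\<ge>0. \<bar>f x\<bar> \<le> M * rho x)}"

definition C_rho_k :: "(real \<Rightarrow> real) set" where
  "C_rho_k = {f \<in> C_rho. \<exists>L. ((\<lambda>x. f x / rho x) \<longlongrightarrow> L) at_top}"

definition Omega :: "(real \<Rightarrow> real) \<Rightarrow> real \<Rightarrow> real" where
  "Omega f \<delta> = Sup {\<bar>f (x + h) - f x\<bar> / ((1 + h\<^sup>2) * (1 + x\<^sup>2)) | x h.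
                      x \<ge> 0 \<and> \<bar>h\<bar> \<le> \<delta> \<and> x + h \<ge> 0}"

end

theory Submission
  imports Defs
begin

text \<open>
  For \<open>x \<ge> 0\<close> the weights \<open>W_basis n k a x\<close> are the distribution of \<open>I + J\<close>, where \<open>I\<close> is
  negative binomial with parameters \<open>n\<close> and \<open>x/(1+x)\<close> and \<open>J\<close> is an independent Poisson
  variable with mean \<open>a x/(1+x) \<le> a\<close>; their factorial moments are explicit, so every
  polynomial moment of \<open>I + J\<close> is bounded by a polynomial in \<open>x\<close>.
  Ispir's inequality for the weighted modulus gives, with \<open>\<delta> = (n+\<beta>)^(-1/2)\<close>,
  \<open>|f t - f x| \<le> 4 \<Omega>(f,\<delta>) (1+x\<^sup>2) B\<^sub>k\<close> for every \<open>t\<close> in the \<open>k\<close>-th Kantorovich cell, where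
  \<open>B\<^sub>k\<close> is a polynomial in \<open>(k - (n+\<beta>)x)\<^sup>2/(n+\<beta>)\<close>, \<open>(k/(n+\<beta>))\<^sup>4\<close> and \<open>x\<^sup>4\<close>.  Averaging
  over the cell and summing against the weights, the second and fourth moments of \<open>I + J\<close>
  bound \<open>\<Sum>\<^sub>k W\<^sub>k B\<^sub>k\<close> by a constant times \<open>(1+x\<^sup>2)\<^sup>2\<close>.
\<close>

section \<open>Negative binomial and Poisson weights\<close>

definition negbin_weight :: "nat \<Rightarrow> real \<Rightarrow> nat \<Rightarrow> real" where
  "negbin_weight N x i = pochhammer (real N) i / fact i * (x ^ i / (1 + x) ^ (i + N))"

definition poisson_weight :: "real \<Rightarrow> nat \<Rightarrow> real" where
  "poisson_weight l j = exp (- l) * l ^ j / fact j"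

lemma negbin_weight_nonneg: "x \<ge> 0 \<Longrightarrow> negbin_weight N x i \<ge> 0"
  by (simp add: negbin_weight_def pochhammer_prod prod_nonneg)

lemma poisson_weight_nonneg: "l \<ge> 0 \<Longrightarrow> poisson_weight l j \<ge> 0"
  by (simp add: poisson_weight_def)

lemma negbin_weight_sums_one:
  fixes x :: real
  assumes x: "x \<ge> 0"
  shows "(\<lambda>i. negbin_weight N x i) sums 1"
proof -
  define y where "y = x / (1 + x)"
  have y: "\<bar>- y\<bar> < 1" using x by (simp add: y_def)
  have coeff: "(- real N gchoose i) * (- y) ^ i = pochhammer (real N) i / fact i * y ^ i" for i
  proof -
    have "(- real N gchoose i) * (- y) ^ i
        = ((-1) ^ i * (-1) ^ i) * (pochhammer (real N) i / fact i * y ^ i)"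
      unfolding gbinomial_pochhammer minus_minus power_minus[of y] by (simp add: mult_ac)
    also have "((-1::real) ^ i * (-1) ^ i) = 1" by (simp flip: power_mult_distrib)
    finally show ?thesis by simp
  qed
  have "(1 + - y) powr (- real N) = (1 + x) ^ N"
  proof -
    have "1 + - y = inverse (1 + x)" using x by (simp add: y_def field_simps)
    then show ?thesis using x by (simp add: powr_minus powr_realpow power_inverse)
  qed
  with gen_binomial_real[OF y, of "- real N"]
  have "(\<lambda>i. pochhammer (real N) i / fact i * y ^ i) sums ((1 + x) ^ N)"
    by (simp only: coeff)
  from sums_divide[OF this, of "(1 + x) ^ N"] x show ?thesis
    by (simp add: negbin_weight_def y_def power_divide power_add mult.assoc)
qed

lemma choose_add_div_fact: "real ((i + r) choose r) / fact (i + r) = 1 / (fact r * fact i)"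
  by (simp add: binomial_fact)

lemma negbin_factorial_moment:
  fixes x :: real
  assumes x: "x \<ge> 0"
  shows "(\<lambda>i. real (i choose r) * negbin_weight N x i) sums (pochhammer (real N) r / fact r * x ^ r)"
proof -
  define c where "c = pochhammer (real N) r / fact r * x ^ r"
  have shift: "real ((i + r) choose r) * negbin_weight N x (i + r) = c * negbin_weight (N + r) x i" for i
  proof -
    have "pochhammer (real N) (r + i) = pochhammer (real N) r * pochhammer (real (N + r)) i"
      by (simp add: pochhammer_product')
    then have "real ((i + r) choose r) * negbin_weight N x (i + r)
        = 1 / (fact r * fact i) * (pochhammer (real N) r * pochhammer (real (N + r)) i)
          * (x ^ (i + r) / (1 + x) ^ (i + r + N))"
      by (simp add: negbin_weight_def add.commute flip: choose_add_div_fact)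
    then show ?thesis by (simp add: c_def negbin_weight_def power_add field_simps)
  qed
  have "(\<lambda>i. real ((i + r) choose r) * negbin_weight N x (i + r)) sums (c * 1)"
    unfolding shift by (rule sums_mult[OF negbin_weight_sums_one[OF x]])
  then show ?thesis
    by (subst sums_zero_iff_shift[of r, symmetric]) (simp_all add: c_def)
qed

lemma poisson_factorial_moment:
  fixes l :: real
  shows "(\<lambda>j. real (j choose r) * poisson_weight l j) sums (l ^ r / fact r)"
proof -
  have shift: "real ((j + r) choose r) * poisson_weight l (j + r)
      = (exp (- l) * l ^ r / fact r) * (l ^ j / fact j)" for j
  proof -
    have "real ((j + r) choose r) * poisson_weight l (j + r)
        = 1 / (fact r * fact j) * (exp (- l) * l ^ (j + r))"
      by (simp add: poisson_weight_def flip: choose_add_div_fact)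
    then show ?thesis by (simp add: power_add field_simps)
  qed
  have "(\<lambda>j. l ^ j / fact j) sums exp l"
    using exp_converges[of l] by (simp add: divide_inverse mult.commute)
  from sums_mult[OF this, of "exp (- l) * l ^ r / fact r"]
  have "(\<lambda>j. real ((j + r) choose r) * poisson_weight l (j + r)) sums (l ^ r / fact r)"
    unfolding shift by (simp add: exp_minus field_simps)
  then show ?thesis
    by (subst sums_zero_iff_shift[of r, symmetric]) simp_all
qed

lemma poisson_weight_sums_one: "(\<lambda>j. poisson_weight l j) sums 1"
  using poisson_factorial_moment[of 0 l] by simp

lemma sums_central_square_of_factorial_moments:
  fixes w :: "nat \<Rightarrow> real"
  assumes "(\<lambda>i. real (i choose 0) * w i) sums A0"
    and "(\<lambda>i. real (i choose 1) * w i) sums A1"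
    and "(\<lambda>i. real (i choose 2) * w i) sums A2"
  shows "(\<lambda>i. w i * (real i - c) ^ 2) sums (2 * A2 + (1 - 2 * c) * A1 + c ^ 2 * A0)"
proof -
  have square: "(real i - c) ^ 2
      = 2 * real (i choose 2) + (1 - 2 * c) * real (i choose 1) + c ^ 2 * real (i choose 0)" for i
    by (simp add: binomial_gbinomial gbinomial_pochhammer' numeral_eq_Suc pochhammer_Suc
        field_simps power2_eq_square)
  have "(\<lambda>i. 2 * (real (i choose 2) * w i) + (1 - 2 * c) * (real (i choose 1) * w i)
      + c ^ 2 * (real (i choose 0) * w i)) sums (2 * A2 + (1 - 2 * c) * A1 + c ^ 2 * A0)"
    by (intro sums_add sums_mult assms)
  moreover have "2 * (real (i choose 2) * w i) + (1 - 2 * c) * (real (i choose 1) * w i)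
      + c ^ 2 * (real (i choose 0) * w i) = w i * (real i - c) ^ 2" for i
    by (subst square) (simp add: algebra_simps)
  ultimately show ?thesis by simp
qed

lemma sums_power4_of_factorial_moments:
  fixes w :: "nat \<Rightarrow> real"
  assumes "(\<lambda>i. real (i choose 1) * w i) sums A1"
    and "(\<lambda>i. real (i choose 2) * w i) sums A2"
    and "(\<lambda>i. real (i choose 3) * w i) sums A3"
    and "(\<lambda>i. real (i choose 4) * w i) sums A4"
  shows "(\<lambda>i. w i * real i ^ 4) sums (24 * A4 + 36 * A3 + 14 * A2 + A1)"
proof -
  have power4: "real i ^ 4 = 24 * real (i choose 4) + 36 * real (i choose 3)
      + 14 * real (i choose 2) + real (i choose 1)" for i
    by (simp add: binomial_gbinomial gbinomial_pochhammer' numeral_eq_Suc pochhammer_Suc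
        field_simps power4_eq_xxxx)
  have "(\<lambda>i. 24 * (real (i choose 4) * w i) + 36 * (real (i choose 3) * w i)
      + 14 * (real (i choose 2) * w i) + real (i choose 1) * w i)
      sums (24 * A4 + 36 * A3 + 14 * A2 + A1)"
    by (intro sums_add sums_mult assms)
  moreover have "24 * (real (i choose 4) * w i) + 36 * (real (i choose 3) * w i)
      + 14 * (real (i choose 2) * w i) + real (i choose 1) * w i = w i * real i ^ 4" for i
    by (subst power4) (simp add: algebra_simps)
  ultimately show ?thesis by simp
qed

lemma negbin_central_moment2:
  assumes "x \<ge> 0"
  shows "(\<lambda>i. negbin_weight N x i * (real i - real N * x) ^ 2) sums (real N * x * (1 + x))"
proof -
  note moment = negbin_factorial_moment[OF assms, where N = N]
  have closed_form: "2 * (pochhammer (real N) 2 / fact 2 * x ^ 2)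
      + (1 - 2 * (real N * x)) * (pochhammer (real N) 1 / fact 1 * x ^ 1)
      + (real N * x) ^ 2 * (pochhammer (real N) 0 / fact 0 * x ^ 0) = real N * x * (1 + x)"
    by (simp add: pochhammer_Suc_prod numeral_eq_Suc algebra_simps power2_eq_square)
  from sums_central_square_of_factorial_moments[OF moment moment moment, where c = "real N * x"]
  show ?thesis unfolding closed_form .
qed

lemma poisson_central_moment2: "(\<lambda>j. poisson_weight l j * (real j - l) ^ 2) sums l"
proof -
  note moment = poisson_factorial_moment[where l = l]
  have closed_form: "2 * (l ^ 2 / fact 2) + (1 - 2 * l) * (l ^ 1 / fact 1) + l ^ 2 * (l ^ 0 / fact 0) = l"
    by (simp add: numeral_eq_Suc algebra_simps power2_eq_square)
  from sums_central_square_of_factorial_moments[OF moment moment moment, where c = l]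
  show ?thesis unfolding closed_form .
qed

lemma negbin_moment4:
  assumes "x \<ge> 0"
  shows "(\<lambda>i. negbin_weight N x i * real i ^ 4) sums
    (pochhammer (real N) 4 * x ^ 4 + 6 * pochhammer (real N) 3 * x ^ 3
     + 7 * pochhammer (real N) 2 * x ^ 2 + real N * x)"
proof -
  note moment = negbin_factorial_moment[OF assms, where N = N]
  have closed_form: "24 * (pochhammer (real N) 4 / fact 4 * x ^ 4) + 36 * (pochhammer (real N) 3 / fact 3 * x ^ 3)
      + 14 * (pochhammer (real N) 2 / fact 2 * x ^ 2) + pochhammer (real N) 1 / fact 1 * x ^ 1
      = pochhammer (real N) 4 * x ^ 4 + 6 * pochhammer (real N) 3 * x ^ 3
        + 7 * pochhammer (real N) 2 * x ^ 2 + real N * x"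
    by (simp add: fact_numeral)
  from sums_power4_of_factorial_moments[OF moment moment moment moment]
  show ?thesis unfolding closed_form .
qed

lemma poisson_moment4:
  "(\<lambda>j. poisson_weight l j * real j ^ 4) sums (l ^ 4 + 6 * l ^ 3 + 7 * l ^ 2 + l)"
proof -
  note moment = poisson_factorial_moment[where l = l]
  have closed_form: "24 * (l ^ 4 / fact 4) + 36 * (l ^ 3 / fact 3) + 14 * (l ^ 2 / fact 2) + l ^ 1 / fact 1
      = l ^ 4 + 6 * l ^ 3 + 7 * l ^ 2 + l"
    by (simp add: fact_numeral)
  from sums_power4_of_factorial_moments[OF moment moment moment moment]
  show ?thesis unfolding closed_form .
qed

lemma negbin_expectation_quartic:
  assumes x: "x \<ge> 0"
  shows "(\<lambda>i. negbin_weight N x i * (c + b * (real i - real N * x)\<^sup>2 + d * real i ^ 4)) sums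
    (c + b * (real N * x * (1 + x)) + d * (pochhammer (real N) 4 * x ^ 4
      + 6 * pochhammer (real N) 3 * x ^ 3 + 7 * pochhammer (real N) 2 * x\<^sup>2 + real N * x))"
proof -
  have split: "negbin_weight N x i * (c + b * (real i - real N * x)\<^sup>2 + d * real i ^ 4)
      = negbin_weight N x i * c + b * (negbin_weight N x i * (real i - real N * x)\<^sup>2)
        + d * (negbin_weight N x i * real i ^ 4)" for i
    by (simp add: algebra_simps)
  show ?thesis
    using sums_add[OF sums_add[OF sums_mult2[OF negbin_weight_sums_one[OF x], where c = c]
          sums_mult[OF negbin_central_moment2[OF x], where c = b]]
        sums_mult[OF negbin_moment4[OF x], where c = d]]
    unfolding sums_cong[OF split] by simp
qed

lemma poisson_expectation_quartic:
  "(\<lambda>j. poisson_weight l j * (b * (real j - l)\<^sup>2 + d * real j ^ 4)) sums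
    (b * l + d * (l ^ 4 + 6 * l ^ 3 + 7 * l\<^sup>2 + l))"
proof -
  have split: "poisson_weight l j * (b * (real j - l)\<^sup>2 + d * real j ^ 4)
      = b * (poisson_weight l j * (real j - l)\<^sup>2) + d * (poisson_weight l j * real j ^ 4)" for j
    by (simp add: algebra_simps)
  show ?thesis
    unfolding sums_cong[OF split] by (intro sums_add sums_mult poisson_central_moment2 poisson_moment4)
qed

section \<open>The basis as a convolution\<close>

lemma W_basis_eq_convolution:
  assumes x: "x \<ge> 0"
  shows "W_basis n k a x
    = (\<Sum>i\<le>k. negbin_weight n x i * poisson_weight (a * x / (1 + x)) (k - i))"
proof -
  have p: "p_poly k n a / fact k
      = (\<Sum>i\<le>k. pochhammer (real n) i / fact i * (a ^ (k - i) / fact (k - i)))"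
    unfolding p_poly_def sum_divide_distrib atLeast0AtMost
    by (rule sum.cong) (auto simp: binomial_fact field_simps)
  have summand: "exp (- (a * x / (1 + x))) * (pochhammer (real n) i / fact i * (a ^ (k - i) / fact (k - i)))
      * (x ^ k / (1 + x) ^ (k + n))
      = negbin_weight n x i * poisson_weight (a * x / (1 + x)) (k - i)" if "i \<le> k" for i
  proof -
    obtain d where k: "k = i + d" using \<open>i \<le> k\<close> le_Suc_ex by blast
    show ?thesis unfolding negbin_weight_def poisson_weight_def k using x
      by (simp add: power_add power_divide power_mult_distrib field_simps)
  qed
  show ?thesis unfolding W_basis_def p sum_distrib_left sum_distrib_right
    by (rule sum.cong[OF refl], rule summand) simp
qed

lemma Cauchy_product_sums_nonneg:
  fixes p q :: "nat \<Rightarrow> real"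
  assumes "p sums A" "q sums B" "\<And>i. p i \<ge> 0" "\<And>j. q j \<ge> 0"
  shows "(\<lambda>k. \<Sum>i\<le>k. p i * q (k - i)) sums (A * B)"
proof -
  have "summable (\<lambda>i. norm (p i))" "summable (\<lambda>j. norm (q j))"
    using assms by (simp_all add: sums_summable)
  from Cauchy_product_sums[OF this] show ?thesis
    using assms(1,2) by (simp add: sums_iff)
qed

lemma W_basis_nonneg: "x \<ge> 0 \<Longrightarrow> a \<ge> 0 \<Longrightarrow> W_basis n k a x \<ge> 0"
  by (simp add: W_basis_eq_convolution negbin_weight_nonneg poisson_weight_nonneg sum_nonneg)

lemma W_basis_sums_one:
  assumes "x \<ge> 0" "a \<ge> 0"
  shows "(\<lambda>k. W_basis n k a x) sums 1"
  using Cauchy_product_sums_nonneg[OF negbin_weight_sums_one poisson_weight_sums_one]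
    assms negbin_weight_nonneg poisson_weight_nonneg
  by (simp add: W_basis_eq_convolution)

lemma Cauchy_product_separable_sums:
  fixes p q u v :: "nat \<Rightarrow> real"
  assumes p: "p sums 1" "\<And>i. p i \<ge> 0" and q: "q sums 1" "\<And>j. q j \<ge> 0"
    and u: "(\<lambda>i. p i * u i) sums U" "\<And>i. u i \<ge> 0"
    and v: "(\<lambda>j. q j * v j) sums V" "\<And>j. v j \<ge> 0"
  shows "(\<lambda>k. \<Sum>i\<le>k. p i * q (k - i) * (u i + v (k - i))) sums (U + V)"
proof -
  have "(\<lambda>k. \<Sum>i\<le>k. (p i * u i) * q (k - i)) sums (U * 1)"
    by (rule Cauchy_product_sums_nonneg[OF u(1) q(1)]) (simp_all add: p(2) q(2) u(2))
  moreover have "(\<lambda>k. \<Sum>i\<le>k. p i * (q (k - i) * v (k - i))) sums (1 * V)"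
    by (rule Cauchy_product_sums_nonneg[OF p(1) v(1)]) (simp_all add: p(2) q(2) v(2))
  ultimately have "(\<lambda>k. (\<Sum>i\<le>k. (p i * u i) * q (k - i)) + (\<Sum>i\<le>k. p i * (q (k - i) * v (k - i))))
      sums (U * 1 + 1 * V)"
    by (intro sums_add)
  moreover have "(\<Sum>i\<le>k. (p i * u i) * q (k - i)) + (\<Sum>i\<le>k. p i * (q (k - i) * v (k - i)))
      = (\<Sum>i\<le>k. p i * q (k - i) * (u i + v (k - i)))" for k
    unfolding sum.distrib[symmetric] by (rule sum.cong) (simp_all add: algebra_simps)
  ultimately show ?thesis by simp
qed

lemma W_basis_expectation_le:
  fixes u v B :: "nat \<Rightarrow> real"
  assumes x: "x \<ge> 0" and a: "a \<ge> 0"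
    and u: "(\<lambda>i. negbin_weight n x i * u i) sums U" "\<And>i. u i \<ge> 0"
    and v: "(\<lambda>j. poisson_weight (a * x / (1 + x)) j * v j) sums V" "\<And>j. v j \<ge> 0"
    and B: "\<And>i j. B (i + j) \<le> u i + v j" "\<And>k. B k \<ge> 0"
  shows "summable (\<lambda>k. W_basis n k a x * B k)" "(\<Sum>k. W_basis n k a x * B k) \<le> U + V"
proof -
  define p where "p = negbin_weight n x"
  define q where "q = poisson_weight (a * x / (1 + x))"
  have p0: "p i \<ge> 0" for i using x by (simp add: p_def negbin_weight_nonneg)
  have q0: "q j \<ge> 0" for j using x a by (simp add: q_def poisson_weight_nonneg)
  define H where "H k = (\<Sum>i\<le>k. p i * q (k - i) * (u i + v (k - i)))" for k
  have H: "H sums (U + V)" unfolding H_def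
    using negbin_weight_sums_one[OF x] poisson_weight_sums_one u v p0 q0
    by (intro Cauchy_product_separable_sums) (simp_all add: p_def q_def)
  have WH: "W_basis n k a x * B k \<le> H k" for k
  proof -
    have "W_basis n k a x * B k = (\<Sum>i\<le>k. p i * q (k - i) * B (i + (k - i)))"
      by (simp add: W_basis_eq_convolution[OF x] sum_distrib_right p_def q_def)
    also have "\<dots> \<le> H k"
      unfolding H_def
    proof (rule sum_mono)
      fix i
      show "p i * q (k - i) * B (i + (k - i)) \<le> p i * q (k - i) * (u i + v (k - i))"
        using p0 q0 by (intro mult_left_mono[OF B(1)]) simp
    qed
    finally show ?thesis .
  qed
  have W0: "W_basis n k a x * B k \<ge> 0" for k using W_basis_nonneg[OF x a] B(2) by simp
  have sH: "summable H" using H by (rule sums_summable)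
  show sW: "summable (\<lambda>k. W_basis n k a x * B k)"
    by (rule summable_comparison_test'[OF sH]) (simp add: W0 WH)
  have "(\<Sum>k. W_basis n k a x * B k) \<le> (\<Sum>k. H k)"
    by (rule suminf_le[OF WH sW sH])
  then show "(\<Sum>k. W_basis n k a x * B k) \<le> U + V" using H by (simp add: sums_iff)
qed

section \<open>The weighted modulus of continuity\<close>

lemma C_rho_growth:
  assumes "f \<in> C_rho"
  obtains M where "M \<ge> 0" "\<And>x. x \<ge> 0 \<Longrightarrow> \<bar>f x\<bar> \<le> M * (1 + x\<^sup>2)"
proof -
  from assms obtain M where M: "\<forall>x\<ge>0. \<bar>f x\<bar> \<le> M * rho x" by (auto simp: C_rho_def)
  have "M \<ge> 0" using M[rule_format, of 0] by (simp add: rho_def)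
  then show ?thesis using that M by (auto simp: rho_def)
qed

lemma one_plus_sq_le_of_dist:
  fixes x z h :: real
  assumes "\<bar>z - x\<bar> \<le> \<bar>h\<bar>"
  shows "1 + z\<^sup>2 \<le> 2 * (1 + h\<^sup>2) * (1 + x\<^sup>2)"
proof -
  have "(z - x)\<^sup>2 \<le> h\<^sup>2" using assms by (simp add: abs_le_square_iff)
  moreover have "2 * x\<^sup>2 + 2 * (z - x)\<^sup>2 - z\<^sup>2 = (z - 2 * x)\<^sup>2"
    by (simp add: algebra_simps power2_eq_square)
  ultimately have "z\<^sup>2 \<le> 2 * x\<^sup>2 + 2 * h\<^sup>2" by (smt (verit) zero_le_power2)
  moreover have "2 * (1 + h\<^sup>2) * (1 + x\<^sup>2) = 2 + 2 * h\<^sup>2 + 2 * x\<^sup>2 + 2 * (h * x)\<^sup>2"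
    by (simp add: algebra_simps power2_eq_square)
  moreover have "(h * x)\<^sup>2 \<ge> 0" by simp
  ultimately show ?thesis by linarith
qed

lemma Omega_set_bdd_above:
  assumes "f \<in> C_rho"
  shows "bdd_above {\<bar>f (x + h) - f x\<bar> / ((1 + h\<^sup>2) * (1 + x\<^sup>2)) | x h.
    x \<ge> 0 \<and> \<bar>h\<bar> \<le> \<delta> \<and> x + h \<ge> 0}"
proof -
  obtain M where M0: "M \<ge> 0" and M: "\<And>x. x \<ge> 0 \<Longrightarrow> \<bar>f x\<bar> \<le> M * (1 + x\<^sup>2)"
    using C_rho_growth[OF assms] by blast
  have "\<bar>f (x + h) - f x\<bar> / ((1 + h\<^sup>2) * (1 + x\<^sup>2)) \<le> 3 * M" if "x \<ge> 0" "x + h \<ge> 0" for x h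
  proof -
    have "1 + (x + h)\<^sup>2 \<le> 2 * (1 + h\<^sup>2) * (1 + x\<^sup>2)" by (rule one_plus_sq_le_of_dist) simp
    moreover have "1 + x\<^sup>2 \<le> (1 + h\<^sup>2) * (1 + x\<^sup>2)" by (simp add: algebra_simps)
    ultimately have "M * (1 + (x + h)\<^sup>2) \<le> M * (2 * (1 + h\<^sup>2) * (1 + x\<^sup>2))"
      and "M * (1 + x\<^sup>2) \<le> M * ((1 + h\<^sup>2) * (1 + x\<^sup>2))"
      using M0 by (simp_all only: mult_left_mono)
    then have "M * (1 + (x + h)\<^sup>2) + M * (1 + x\<^sup>2) \<le> 3 * M * ((1 + h\<^sup>2) * (1 + x\<^sup>2))"
      by (simp add: algebra_simps)
    moreover have "\<bar>f (x + h) - f x\<bar> \<le> M * (1 + (x + h)\<^sup>2) + M * (1 + x\<^sup>2)"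
      using M[OF \<open>x + h \<ge> 0\<close>] M[OF \<open>x \<ge> 0\<close>] by linarith
    ultimately show ?thesis by (simp add: divide_le_eq add_pos_nonneg)
  qed
  then show ?thesis unfolding bdd_above_def by blast
qed

lemma Omega_bound:
  assumes "f \<in> C_rho" "x \<ge> 0" "x + h \<ge> 0" "\<bar>h\<bar> \<le> \<delta>"
  shows "\<bar>f (x + h) - f x\<bar> \<le> Omega f \<delta> * ((1 + h\<^sup>2) * (1 + x\<^sup>2))"
proof -
  have "\<bar>f (x + h) - f x\<bar> / ((1 + h\<^sup>2) * (1 + x\<^sup>2)) \<le> Omega f \<delta>"
    unfolding Omega_def by (rule cSup_upper[OF _ Omega_set_bdd_above[OF assms(1)]]) (use assms in blast)
  then show ?thesis by (simp add: divide_le_eq add_pos_nonneg)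
qed

lemma Omega_nonneg: "f \<in> C_rho \<Longrightarrow> \<delta> \<ge> 0 \<Longrightarrow> Omega f \<delta> \<ge> 0"
  using Omega_bound[of f 0 0 \<delta>] by simp

lemma Omega_bound_near:
  assumes f: "f \<in> C_rho" and y: "y \<ge> 0" "y + s \<ge> 0" and s: "\<bar>s\<bar> \<le> \<delta>" and yx: "\<bar>y - x\<bar> \<le> \<bar>h\<bar>"
  shows "\<bar>f (y + s) - f y\<bar> \<le> Omega f \<delta> * ((1 + \<delta>\<^sup>2) * (2 * (1 + h\<^sup>2) * (1 + x\<^sup>2)))"
proof -
  have "\<bar>f (y + s) - f y\<bar> \<le> Omega f \<delta> * ((1 + s\<^sup>2) * (1 + y\<^sup>2))"
    by (rule Omega_bound[OF f y s])
  also have "\<dots> \<le> Omega f \<delta> * ((1 + \<delta>\<^sup>2) * (2 * (1 + h\<^sup>2) * (1 + x\<^sup>2)))"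
  proof (intro mult_left_mono mult_mono)
    show "1 + s\<^sup>2 \<le> 1 + \<delta>\<^sup>2" using s by (metis abs_ge_zero power2_abs power_mono add_left_mono)
    show "1 + y\<^sup>2 \<le> 2 * (1 + h\<^sup>2) * (1 + x\<^sup>2)" using yx by (rule one_plus_sq_le_of_dist)
    show "Omega f \<delta> \<ge> 0" using Omega_nonneg[OF f] s by simp
  qed simp_all
  finally show ?thesis .
qed

lemma telescope_abs_le:
  fixes g :: "nat \<Rightarrow> real"
  assumes "\<And>i. i < N \<Longrightarrow> \<bar>g (Suc i) - g i\<bar> \<le> C"
  shows "\<bar>g N - g 0\<bar> \<le> real N * C"
proof -
  have "\<bar>g N - g 0\<bar> = \<bar>\<Sum>i<N. g (Suc i) - g i\<bar>" by (simp add: sum_lessThan_telescope)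
  also have "\<dots> \<le> (\<Sum>i<N. \<bar>g (Suc i) - g i\<bar>)" by (rule sum_abs)
  also have "\<dots> \<le> real N * C" using sum_mono[of "{..<N}", OF assms] by simp
  finally show ?thesis .
qed

text \<open>
  The segment from \<open>x\<close> to \<open>t\<close> is cut into \<open>N = \<lceil>|t - x|/\<delta>\<rceil>\<close> steps
  of length at most \<open>\<delta>\<close>, each of which costs at most \<open>\<Omega>(f,\<delta>) (1+\<delta>\<^sup>2) \<cdot> 2 (1+(t-x)\<^sup>2) (1+x\<^sup>2)\<close>.
\<close>

lemma C_rho_diff_le_Omega:
  assumes f: "f \<in> C_rho" and d: "\<delta> > 0" and x: "x \<ge> 0" and t: "t \<ge> 0"
  shows "\<bar>f t - f x\<bar>
    \<le> 2 * (1 + \<bar>t - x\<bar> / \<delta>) * (1 + \<delta>\<^sup>2) * Omega f \<delta> * (1 + (t - x)\<^sup>2) * (1 + x\<^sup>2)"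
proof (cases "t = x")
  case True
  then show ?thesis using Omega_nonneg[OF f] d by (simp add: add_pos_nonneg)
next
  case False
  define h where "h = t - x"
  define N where "N = nat \<lceil>\<bar>h\<bar> / \<delta>\<rceil>"
  have hd: "\<bar>h\<bar> / \<delta> > 0" using False d by (simp add: h_def)
  have Npos: "real N > 0" and NL: "\<bar>h\<bar> / \<delta> \<le> real N" and NU: "real N \<le> 1 + \<bar>h\<bar> / \<delta>"
    unfolding N_def using hd by linarith+
  have step: "\<bar>h / real N\<bar> \<le> \<delta>"
    using NL d Npos by (simp add: field_simps abs_divide)
  define z where "z i = x + real i * h / real N" for i
  have z: "z 0 = x" "z N = t" using Npos by (auto simp: z_def h_def)
  have z_between: "z i \<ge> 0 \<and> \<bar>z i - x\<bar> \<le> \<bar>h\<bar>" if "i \<le> N" for i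
  proof -
    define q where "q = real i / real N"
    have q: "0 \<le> q" "q \<le> 1" using that Npos by (auto simp: q_def)
    have "z i = (1 - q) * x + q * t"
      unfolding z_def q_def h_def by (simp add: algebra_simps diff_divide_distrib add_divide_distrib)
    then have "z i \<ge> 0" using q x t by simp
    moreover have "\<bar>z i - x\<bar> = q * \<bar>h\<bar>" using q by (simp add: z_def q_def abs_mult)
    ultimately show ?thesis using q by (simp add: mult_left_le_one_le)
  qed
  define C where "C = Omega f \<delta> * ((1 + \<delta>\<^sup>2) * (2 * (1 + h\<^sup>2) * (1 + x\<^sup>2)))"
  have each: "\<bar>f (z (Suc i)) - f (z i)\<bar> \<le> C" if "i < N" for i
  proof -
    have "z (Suc i) = z i + h / real N" unfolding z_def by (simp add: field_simps add_divide_distrib)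
    then show ?thesis
      using z_between[of i] z_between[of "Suc i"] that step unfolding C_def
      by (metis Omega_bound_near[OF f] Suc_leI less_imp_le)
  qed
  have "\<bar>f t - f x\<bar> \<le> real N * C"
    using telescope_abs_le[of N "\<lambda>i. f (z i)" C] each z by simp
  also have "\<dots> \<le> (1 + \<bar>h\<bar> / \<delta>) * C"
    using NU Omega_nonneg[OF f] d by (intro mult_right_mono) (simp_all add: C_def add_pos_nonneg)
  finally show ?thesis unfolding C_def h_def by (simp only: mult_ac)
qed

section \<open>The estimate on a single Kantorovich cell\<close>

lemma Ispir_factor_le:
  fixes v s :: real
  assumes v: "v \<ge> 0" and s: "s \<ge> 1"
  shows "(1 + v * s) * (1 + v\<^sup>2) \<le> 2 + 2 * s\<^sup>2 * v\<^sup>2 + v ^ 4 / 2"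
proof -
  have "2 + 2 * s\<^sup>2 * v\<^sup>2 + v ^ 4 / 2 - (1 + v * s) * (1 + v\<^sup>2)
      = (1 - v * s)\<^sup>2 / 2 + (s * v - v\<^sup>2)\<^sup>2 / 2 + 1 / 2 + (s\<^sup>2 - 1) * v\<^sup>2"
    by (simp add: field_simps power2_eq_square power4_eq_xxxx)
  moreover have "s\<^sup>2 \<ge> 1" using s by (simp add: one_le_power)
  then have "(s\<^sup>2 - 1) * v\<^sup>2 \<ge> 0" by simp
  moreover have "(1 - v * s)\<^sup>2 / 2 \<ge> 0" "(s * v - v\<^sup>2)\<^sup>2 / 2 \<ge> 0" by simp_all
  ultimately show ?thesis by linarith
qed

lemma cell_mem_bounds:
  fixes m \<alpha> \<beta> t :: real and k :: nat
  assumes "0 \<le> \<alpha>" "\<alpha> \<le> \<beta>" "m > 0" "t \<in> {(real k + \<alpha>) / m .. (real k + \<alpha> + 1) / m}"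
  shows "0 \<le> t" "t \<le> (real k + \<beta> + 1) / m"
proof -
  have "0 \<le> (real k + \<alpha>) / m" "(real k + \<alpha> + 1) / m \<le> (real k + \<beta> + 1) / m"
    using assms by (simp_all add: divide_right_mono)
  then show "0 \<le> t" "t \<le> (real k + \<beta> + 1) / m" using assms(4) by auto
qed

lemma cell_dist_sq_le:
  fixes m x t \<alpha> \<beta> :: real and k :: nat
  assumes m: "m \<ge> 1" and \<alpha>: "0 \<le> \<alpha>" "\<alpha> \<le> \<beta>"
    and t: "t \<in> {(real k + \<alpha>) / m .. (real k + \<alpha> + 1) / m}"
  shows "m * (t - x)\<^sup>2 \<le> 2 * (real k - m * x)\<^sup>2 / m + 2 * (\<beta> + 1)\<^sup>2"
proof -
  define d where "d = t - real k / m"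
  have mp: "m > 0" using m by simp
  have d0: "d \<ge> 0" using t \<alpha> mp by (simp add: d_def field_simps)
  have "t \<le> (real k + \<beta> + 1) / m" using cell_mem_bounds[OF \<alpha> mp t] by simp
  then have d1: "d \<le> (\<beta> + 1) / m" using mp by (simp add: d_def diff_divide_distrib add_divide_distrib)
  have tx: "t - x = (real k - m * x) / m + d" using mp by (simp add: d_def field_simps)
  have "(t - x)\<^sup>2 \<le> 2 * ((real k - m * x) / m)\<^sup>2 + 2 * d\<^sup>2"
  proof -
    have "2 * ((real k - m * x) / m)\<^sup>2 + 2 * d\<^sup>2 - (t - x)\<^sup>2 = ((real k - m * x) / m - d)\<^sup>2"
      unfolding tx by (simp add: algebra_simps power2_eq_square)
    then show ?thesis by (smt (verit) zero_le_power2)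
  qed
  then have "m * (t - x)\<^sup>2 \<le> 2 * (real k - m * x)\<^sup>2 / m + 2 * (m * d\<^sup>2)"
    using mp by (simp add: power2_eq_square field_simps)
  moreover have "m * d\<^sup>2 \<le> (\<beta> + 1)\<^sup>2"
  proof -
    have "d\<^sup>2 \<le> ((\<beta> + 1) / m)\<^sup>2" using d0 d1 by (simp add: power_mono)
    then have "m * d\<^sup>2 \<le> (\<beta> + 1)\<^sup>2 / m" using mp by (simp add: power2_eq_square field_simps)
    also have "\<dots> \<le> (\<beta> + 1)\<^sup>2" using m by (simp add: divide_le_eq mult_le_cancel_left1)
    finally show ?thesis .
  qed
  ultimately show ?thesis by linarith
qed

lemma diff_power4_le:
  fixes t x :: real
  assumes "t \<ge> 0" "x \<ge> 0"
  shows "(t - x) ^ 4 \<le> t ^ 4 + x ^ 4"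
proof (cases "t \<le> x")
  case True
  then have "(t - x) ^ 4 = (x - t) ^ 4" by (simp add: power4_eq_xxxx algebra_simps)
  also have "\<dots> \<le> x ^ 4" using True assms by (simp add: power_mono)
  finally show ?thesis by (simp add: add_increasing)
next
  case False
  then have "(t - x) ^ 4 \<le> t ^ 4" using assms by (simp add: power_mono)
  then show ?thesis by (simp add: add_increasing2)
qed

text \<open>\<open>cell_bound \<beta> m x k\<close> majorises \<open>|f t - f x| / (4 \<Omega>(f, m^(-1/2)) (1+x\<^sup>2))\<close> on the \<open>k\<close>-th cell.\<close>

definition cell_bound :: "real \<Rightarrow> real \<Rightarrow> real \<Rightarrow> nat \<Rightarrow> real" where
  "cell_bound \<beta> m x k = 2 + 4 * (real k - m * x)\<^sup>2 / m + 4 * (\<beta> + 1)\<^sup>2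
     + 4 * ((real k + \<beta> + 1) / m) ^ 4 + 4 * x ^ 4"

lemma cell_bound_nonneg: "m > 0 \<Longrightarrow> cell_bound \<beta> m x k \<ge> 0"
  unfolding cell_bound_def by (intro add_nonneg_nonneg) auto

lemma C_rho_diff_le_on_cell:
  fixes f :: "real \<Rightarrow> real" and m \<alpha> \<beta> x t :: real and k :: nat
  assumes f: "f \<in> C_rho" and \<alpha>: "0 \<le> \<alpha>" "\<alpha> \<le> \<beta>" and m: "m \<ge> 1" and x: "x \<ge> 0"
    and t: "t \<in> {(real k + \<alpha>) / m .. (real k + \<alpha> + 1) / m}"
  shows "\<bar>f t - f x\<bar> \<le> 4 * Omega f (1 / sqrt m) * (1 + x\<^sup>2) * cell_bound \<beta> m x k"
proof -
  have mp: "m > 0" using m by simp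
  define u where "u = t - x"
  define s where "s = sqrt m"
  have s1: "s \<ge> 1" and ss: "s\<^sup>2 = m" using m by (simp_all add: s_def)
  have t0: "t \<ge> 0" and tle: "t \<le> (real k + \<beta> + 1) / m"
    using cell_mem_bounds[OF \<alpha> mp t] by simp_all
  have "(1 + \<bar>u\<bar> * s) * (1 + u\<^sup>2) \<le> 2 + 2 * (m * u\<^sup>2) + u ^ 4 / 2"
    using Ispir_factor_le[of "\<bar>u\<bar>" s, OF _ s1] ss by simp
  moreover have "m * u\<^sup>2 \<le> 2 * (real k - m * x)\<^sup>2 / m + 2 * (\<beta> + 1)\<^sup>2"
    unfolding u_def by (rule cell_dist_sq_le[OF m \<alpha> t])
  moreover have "u ^ 4 \<le> ((real k + \<beta> + 1) / m) ^ 4 + x ^ 4"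
    using diff_power4_le[OF t0 x] power_mono[OF tle t0, of 4] by (simp add: u_def)
  moreover have "((real k + \<beta> + 1) / m) ^ 4 \<ge> 0" "x ^ 4 \<ge> 0" using \<alpha> mp by simp_all
  ultimately have factor: "(1 + \<bar>u\<bar> * s) * (1 + u\<^sup>2) \<le> cell_bound \<beta> m x k"
    unfolding cell_bound_def by linarith
  have "\<bar>f t - f x\<bar> \<le> 2 * (1 + \<bar>u\<bar> * s) * (1 + (1 / sqrt m)\<^sup>2) * Omega f (1 / sqrt m)
      * (1 + u\<^sup>2) * (1 + x\<^sup>2)"
    using C_rho_diff_le_Omega[OF f _ x t0, of "1 / sqrt m"] mp by (simp add: u_def s_def)
  also have "\<dots> = 2 * (1 + (1 / sqrt m)\<^sup>2) * Omega f (1 / sqrt m) * (1 + x\<^sup>2)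
      * ((1 + \<bar>u\<bar> * s) * (1 + u\<^sup>2))"
    by (simp only: mult_ac)
  also have "\<dots> \<le> 2 * 2 * Omega f (1 / sqrt m) * (1 + x\<^sup>2) * cell_bound \<beta> m x k"
  proof -
    have "1 + (1 / sqrt m)\<^sup>2 \<le> 2" using m by (simp add: power_divide)
    moreover have "Omega f (1 / sqrt m) \<ge> 0" using Omega_nonneg[OF f] mp by simp
    ultimately show ?thesis using factor s1 by (intro mult_mono) auto
  qed
  finally show ?thesis by simp
qed

lemma cell_average_diff_le:
  fixes f :: "real \<Rightarrow> real" and m \<alpha> c B :: real and k :: nat
  assumes f: "f \<in> C_rho" and \<alpha>: "0 \<le> \<alpha>" and m: "m \<ge> 1"
    and bound: "\<And>t. t \<in> {(real k + \<alpha>) / m .. (real k + \<alpha> + 1) / m} \<Longrightarrow> \<bar>f t - c\<bar> \<le> B"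
  shows "\<bar>m * integral {(real k + \<alpha>) / m .. (real k + \<alpha> + 1) / m} f - c\<bar> \<le> B"
proof -
  define lo where "lo = (real k + \<alpha>) / m"
  define hi where "hi = (real k + \<alpha> + 1) / m"
  have mp: "m > 0" using m by simp
  have lohi: "lo \<le> hi" and hl: "hi - lo = 1 / m"
    using mp by (simp_all add: lo_def hi_def divide_right_mono field_simps)
  have "lo \<ge> 0" using \<alpha> mp by (simp add: lo_def)
  then have "continuous_on {lo..hi} f"
    using f unfolding C_rho_def by (auto intro: continuous_on_subset)
  then have int: "integral {lo..hi} (\<lambda>t. f t - c) = integral {lo..hi} f - c / m"
    using lohi hl by (subst integral_diff) (auto intro: integrable_continuous_interval)
  have "norm (integral {lo..hi} (\<lambda>t. f t - c)) \<le> B * (hi - lo)"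
    using \<open>continuous_on {lo..hi} f\<close> bound lohi
    by (intro integral_bound continuous_intros) (auto simp: lo_def hi_def)
  then have "\<bar>integral {lo..hi} f - c / m\<bar> * m \<le> B"
    using int hl mp by (simp add: pos_le_divide_eq)
  moreover have "\<bar>integral {lo..hi} f - c / m\<bar> * m = \<bar>m * integral {lo..hi} f - c\<bar>"
    using mp by (simp add: abs_mult_pos[symmetric] field_simps)
  ultimately show ?thesis by (simp add: lo_def hi_def)
qed

section \<open>The expected cell bound\<close>

lemma square_sum3_le: "((p::real) + q + r)\<^sup>2 \<le> 3 * (p\<^sup>2 + q\<^sup>2 + r\<^sup>2)"
proof -
  have "3 * (p\<^sup>2 + q\<^sup>2 + r\<^sup>2) - (p + q + r)\<^sup>2 = (p - q)\<^sup>2 + (q - r)\<^sup>2 + (p - r)\<^sup>2"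
    by (simp add: algebra_simps power2_eq_square)
  moreover have "(p - q)\<^sup>2 + (q - r)\<^sup>2 + (p - r)\<^sup>2 \<ge> 0" by simp
  ultimately show ?thesis by linarith
qed

lemma power4_sum3_le: "((p::real) + q + r) ^ 4 \<le> 27 * (p ^ 4 + q ^ 4 + r ^ 4)"
proof -
  have "(p + q + r) ^ 4 = ((p + q + r)\<^sup>2)\<^sup>2" by (simp add: power4_eq_xxxx power2_eq_square)
  also have "\<dots> \<le> (3 * (p\<^sup>2 + q\<^sup>2 + r\<^sup>2))\<^sup>2" by (rule power_mono[OF square_sum3_le]) simp
  also have "\<dots> = 9 * (p\<^sup>2 + q\<^sup>2 + r\<^sup>2)\<^sup>2" by (simp add: power2_eq_square algebra_simps)
  also have "\<dots> \<le> 9 * (3 * ((p\<^sup>2)\<^sup>2 + (q\<^sup>2)\<^sup>2 + (r\<^sup>2)\<^sup>2))"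
    using square_sum3_le[of "p\<^sup>2" "q\<^sup>2" "r\<^sup>2"] by simp
  finally show ?thesis by (simp add: power_mult[symmetric])
qed

text \<open>
  Splitting \<open>k - m x = (i - n x) + (j - l) + (l - \<beta> x)\<close> separates the cell bound at \<open>k = i + j\<close>
  into a negative binomial part and a Poisson part.
\<close>

lemma cell_bound_add_le:
  fixes i j n :: nat and \<beta> x l m :: real
  assumes m: "m = real n + \<beta>" "m > 0"
  shows "cell_bound \<beta> m x (i + j)
    \<le> (2 + 12 * (l - \<beta> * x)\<^sup>2 / m + 4 * (\<beta> + 1)\<^sup>2 + 108 * (\<beta> + 1) ^ 4 / m ^ 4 + 4 * x ^ 4
        + 12 / m * (real i - real n * x)\<^sup>2 + 108 / m ^ 4 * real i ^ 4)
      + (12 / m * (real j - l)\<^sup>2 + 108 / m ^ 4 * real j ^ 4)"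
proof -
  have "(real (i + j) - m * x)\<^sup>2 \<le> 3 * ((real i - real n * x)\<^sup>2 + (real j - l)\<^sup>2 + (l - \<beta> * x)\<^sup>2)"
    using square_sum3_le[of "real i - real n * x" "real j - l" "l - \<beta> * x"] m
    by (simp add: algebra_simps)
  then have "4 * (real (i + j) - m * x)\<^sup>2 / m
      \<le> 4 * (3 * ((real i - real n * x)\<^sup>2 + (real j - l)\<^sup>2 + (l - \<beta> * x)\<^sup>2)) / m"
    using m(2) by (simp add: divide_right_mono)
  also have "\<dots> = 12 * (l - \<beta> * x)\<^sup>2 / m + 12 / m * (real i - real n * x)\<^sup>2 + 12 / m * (real j - l)\<^sup>2"
    using m(2) by (simp add: field_simps)
  finally have dev: "4 * (real (i + j) - m * x)\<^sup>2 / m \<le> \<dots>" .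
  have "(real (i + j) + \<beta> + 1) ^ 4 \<le> 27 * (real i ^ 4 + real j ^ 4 + (\<beta> + 1) ^ 4)"
    using power4_sum3_le[of "real i" "real j" "\<beta> + 1"] by (simp add: add.assoc)
  then have "4 * ((real (i + j) + \<beta> + 1) / m) ^ 4 \<le> 4 * (27 * (real i ^ 4 + real j ^ 4 + (\<beta> + 1) ^ 4)) / m ^ 4"
    using m(2) by (simp add: power_divide divide_right_mono)
  also have "\<dots> = 108 * (\<beta> + 1) ^ 4 / m ^ 4 + 108 / m ^ 4 * real i ^ 4 + 108 / m ^ 4 * real j ^ 4"
    using m(2) by (simp add: field_simps)
  finally have quartic: "4 * ((real (i + j) + \<beta> + 1) / m) ^ 4 \<le> \<dots>" .
  from dev quartic show ?thesis unfolding cell_bound_def by linarith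
qed

lemma powers_le_one_plus_sq_sq:
  fixes x :: real
  assumes x: "x \<ge> 0"
  shows "1 \<le> (1 + x\<^sup>2)\<^sup>2" "x \<le> (1 + x\<^sup>2)\<^sup>2" "x\<^sup>2 \<le> (1 + x\<^sup>2)\<^sup>2" "x ^ 3 \<le> (1 + x\<^sup>2)\<^sup>2"
    "x ^ 4 \<le> (1 + x\<^sup>2)\<^sup>2"
proof -
  have P: "(1 + x\<^sup>2)\<^sup>2 = 1 + 2 * x\<^sup>2 + x ^ 4" by (simp add: power2_eq_square power4_eq_xxxx algebra_simps)
  have "x\<^sup>2 \<ge> 0" "x ^ 4 \<ge> 0" by simp_all
  moreover have "0 \<le> (x - 1)\<^sup>2" "0 \<le> x\<^sup>2 * ((x - 1 / 2)\<^sup>2 + 3 / 4)" by simp_all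
  moreover have "(x - 1)\<^sup>2 = 1 + x\<^sup>2 - 2 * x"
    "x\<^sup>2 * ((x - 1 / 2)\<^sup>2 + 3 / 4) = x\<^sup>2 + x ^ 4 - x ^ 3"
    by (simp_all add: power2_eq_square power3_eq_cube power4_eq_xxxx algebra_simps)
  ultimately show "1 \<le> (1 + x\<^sup>2)\<^sup>2" "x \<le> (1 + x\<^sup>2)\<^sup>2" "x\<^sup>2 \<le> (1 + x\<^sup>2)\<^sup>2" "x ^ 3 \<le> (1 + x\<^sup>2)\<^sup>2"
    "x ^ 4 \<le> (1 + x\<^sup>2)\<^sup>2"
    unfolding P using x by linarith+
qed

lemma pochhammer_le_power4:
  fixes N m :: real
  assumes N: "1 \<le> N" "N \<le> m"
  shows "pochhammer N 4 \<le> 24 * m ^ 4" "pochhammer N 3 \<le> 6 * m ^ 4" "pochhammer N 2 \<le> 2 * m ^ 4"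
    "N \<le> m ^ 4"
proof -
  have a: "N + 1 \<le> 2 * m" "N + 2 \<le> 3 * m" "N + 3 \<le> 4 * m" using N by linarith+
  have mm: "m \<le> m\<^sup>2" "m\<^sup>2 \<le> m ^ 3" "m ^ 3 \<le> m ^ 4" using N
    by (simp_all add: power2_eq_square power3_eq_cube power4_eq_xxxx)
  have "N * (N + 1) * (N + 2) * (N + 3) \<le> m * (2 * m) * (3 * m) * (4 * m)"
    using N a by (intro mult_mono) auto
  then show "pochhammer N 4 \<le> 24 * m ^ 4"
    by (simp add: numeral_eq_Suc pochhammer_Suc power4_eq_xxxx)
  have "N * (N + 1) * (N + 2) \<le> m * (2 * m) * (3 * m)"
    using N a by (intro mult_mono) auto
  then show "pochhammer N 3 \<le> 6 * m ^ 4"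
    using mm by (simp add: numeral_eq_Suc pochhammer_Suc power3_eq_cube)
  have "N * (N + 1) \<le> m * (2 * m)"
    using N a by (intro mult_mono) auto
  then show "pochhammer N 2 \<le> 2 * m ^ 4"
    using mm by (simp add: numeral_eq_Suc pochhammer_Suc power2_eq_square)
  show "N \<le> m ^ 4" using N mm by linarith
qed

lemma divide_le_self_real: "0 \<le> (c::real) \<Longrightarrow> 1 \<le> d \<Longrightarrow> c / d \<le> c"
  using divide_left_mono[of 1 d c] by simp

lemma mult_divide_le_mult: "0 \<le> (c::real) \<Longrightarrow> y / d \<le> z \<Longrightarrow> c / d * y \<le> c * z"
  using mult_left_mono[of "y / d" z c] by (simp only: times_divide_eq_left times_divide_eq_right)

lemma negbin_cell_terms_le:
  fixes n :: nat and m x :: real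
  assumes n: "1 \<le> real n" "real n \<le> m" and x: "x \<ge> 0"
  shows "12 / m * (real n * x * (1 + x))
      + 108 / m ^ 4 * (pochhammer (real n) 4 * x ^ 4 + 6 * pochhammer (real n) 3 * x ^ 3
          + 7 * pochhammer (real n) 2 * x\<^sup>2 + real n * x)
    \<le> 12 * x + 12 * x\<^sup>2 + 108 * (24 * x ^ 4 + 36 * x ^ 3 + 14 * x\<^sup>2 + x)"
proof -
  have mp: "m > 0" using n by simp
  have "real n * x * (1 + x) \<le> m * (x + x\<^sup>2)"
    using mult_right_mono[OF n(2), of "x + x\<^sup>2"] x by (simp add: power2_eq_square algebra_simps)
  then have "real n * x * (1 + x) / m \<le> x + x\<^sup>2" using mp by (simp add: pos_divide_le_eq mult.commute)
  moreover note bounds = pochhammer_le_power4[OF n]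
  have "pochhammer (real n) 4 * x ^ 4 + 6 * pochhammer (real n) 3 * x ^ 3
      + 7 * pochhammer (real n) 2 * x\<^sup>2 + real n * x
    \<le> (24 * m ^ 4) * x ^ 4 + 6 * (6 * m ^ 4) * x ^ 3 + 7 * (2 * m ^ 4) * x\<^sup>2 + m ^ 4 * x"
    using bounds x by (intro add_mono mult_right_mono mult_left_mono) auto
  then have "(pochhammer (real n) 4 * x ^ 4 + 6 * pochhammer (real n) 3 * x ^ 3
      + 7 * pochhammer (real n) 2 * x\<^sup>2 + real n * x) / m ^ 4 \<le> 24 * x ^ 4 + 36 * x ^ 3 + 14 * x\<^sup>2 + x"
    using mp by (simp add: pos_divide_le_eq algebra_simps)
  ultimately show ?thesis
    using mult_divide_le_mult[of 12] mult_divide_le_mult[of 108] by (smt (verit, best))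
qed

lemma poisson_cell_terms_le:
  fixes m l a :: real
  assumes m: "m \<ge> 1" and l: "0 \<le> l" "l \<le> a"
  shows "12 / m * l + 108 / m ^ 4 * (l ^ 4 + 6 * l ^ 3 + 7 * l\<^sup>2 + l)
    \<le> 12 * a + 108 * (a ^ 4 + 6 * a ^ 3 + 7 * a\<^sup>2 + a)"
proof -
  have "l / m \<le> a" using divide_le_self_real[of l m] m l by simp
  moreover have "(l ^ 4 + 6 * l ^ 3 + 7 * l\<^sup>2 + l) / m ^ 4 \<le> l ^ 4 + 6 * l ^ 3 + 7 * l\<^sup>2 + l"
    using l m by (intro divide_le_self_real) (auto simp: one_le_power)
  moreover have "l ^ 4 + 6 * l ^ 3 + 7 * l\<^sup>2 + l \<le> a ^ 4 + 6 * a ^ 3 + 7 * a\<^sup>2 + a"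
    using l by (intro add_mono mult_left_mono power_mono) auto
  ultimately show ?thesis
    using mult_divide_le_mult[of 12 l m a] mult_divide_le_mult[of 108] by (smt (verit, best))
qed

lemma cell_const_terms_le:
  fixes m l a \<beta> x :: real
  assumes m: "m \<ge> 1" and l: "0 \<le> l" "l \<le> a"
  shows "12 * (l - \<beta> * x)\<^sup>2 / m + 108 * (\<beta> + 1) ^ 4 / m ^ 4
    \<le> 24 * a\<^sup>2 + 24 * \<beta>\<^sup>2 * x\<^sup>2 + 108 * (\<beta> + 1) ^ 4"
proof -
  have "(l - \<beta> * x)\<^sup>2 \<le> 2 * l\<^sup>2 + 2 * (\<beta> * x)\<^sup>2"
  proof -
    have "2 * l\<^sup>2 + 2 * (\<beta> * x)\<^sup>2 - (l - \<beta> * x)\<^sup>2 = (l + \<beta> * x)\<^sup>2"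
      by (simp add: power2_eq_square algebra_simps)
    then show ?thesis by (smt (verit) zero_le_power2)
  qed
  moreover have "l\<^sup>2 \<le> a\<^sup>2" using l by (simp add: power_mono)
  moreover have "12 * (l - \<beta> * x)\<^sup>2 / m \<le> 12 * (l - \<beta> * x)\<^sup>2"
    using m by (intro divide_le_self_real) auto
  moreover have "108 * (\<beta> + 1) ^ 4 / m ^ 4 \<le> 108 * (\<beta> + 1) ^ 4"
    using m by (intro divide_le_self_real) (auto simp: one_le_power)
  ultimately show ?thesis by (simp add: power_mult_distrib)
qed

definition cell_moment_const :: "real \<Rightarrow> real \<Rightarrow> real" where
  "cell_moment_const a \<beta> = 2 + 24 * a\<^sup>2 + 4 * (\<beta> + 1)\<^sup>2 + 108 * (\<beta> + 1) ^ 4 + 24 * \<beta>\<^sup>2 + 28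
     + 12 * a + 8100 + 108 * (a ^ 4 + 6 * a ^ 3 + 7 * a\<^sup>2 + a)"

lemma cell_moment_const_pos: "a \<ge> 0 \<Longrightarrow> cell_moment_const a \<beta> > 0"
  unfolding cell_moment_const_def by (intro add_pos_nonneg) auto

lemma cell_moment_polynomial_le:
  fixes a \<beta> x :: real
  assumes a: "a \<ge> 0" and x: "x \<ge> 0"
  shows "2 + (24 * a\<^sup>2 + 24 * \<beta>\<^sup>2 * x\<^sup>2 + 108 * (\<beta> + 1) ^ 4) + 4 * (\<beta> + 1)\<^sup>2 + 4 * x ^ 4
      + (12 * x + 12 * x\<^sup>2 + 108 * (24 * x ^ 4 + 36 * x ^ 3 + 14 * x\<^sup>2 + x))
      + (12 * a + 108 * (a ^ 4 + 6 * a ^ 3 + 7 * a\<^sup>2 + a))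
    \<le> cell_moment_const a \<beta> * (1 + x\<^sup>2)\<^sup>2"
proof -
  define P where "P = (1 + x\<^sup>2)\<^sup>2"
  note powers = powers_le_one_plus_sq_sq[OF x, folded P_def]
  define C0 where "C0 = 2 + 24 * a\<^sup>2 + 4 * (\<beta> + 1)\<^sup>2 + 108 * (\<beta> + 1) ^ 4"
  define Pa where "Pa = a ^ 4 + 6 * a ^ 3 + 7 * a\<^sup>2 + a"
  have "c \<le> c * P" if "c \<ge> 0" for c using that powers(1) by (simp add: mult_le_cancel_left1)
  then have "C0 \<le> C0 * P" "12 * a \<le> 12 * a * P" "108 * Pa \<le> 108 * Pa * P"
    using a by (simp_all add: C0_def Pa_def)
  moreover have "24 * \<beta>\<^sup>2 * x\<^sup>2 \<le> 24 * \<beta>\<^sup>2 * P" using powers(3) by (simp add: mult_left_mono)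
  moreover have "cell_moment_const a \<beta> * P
      = C0 * P + 24 * \<beta>\<^sup>2 * P + 28 * P + 12 * a * P + 8100 * P + 108 * Pa * P"
    by (simp add: cell_moment_const_def C0_def Pa_def algebra_simps)
  ultimately show ?thesis unfolding P_def[symmetric] using powers by (simp add: C0_def Pa_def)
qed

lemma W_basis_cell_bound_le:
  fixes n :: nat and a \<beta> x :: real
  assumes n: "n \<ge> 1" and \<beta>: "\<beta> \<ge> 0" and a: "a \<ge> 0" and x: "x \<ge> 0"
  shows "summable (\<lambda>k. W_basis n k a x * cell_bound \<beta> (real n + \<beta>) x k)"
    "(\<Sum>k. W_basis n k a x * cell_bound \<beta> (real n + \<beta>) x k) \<le> cell_moment_const a \<beta> * (1 + x\<^sup>2)\<^sup>2"
proof -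
  define m where "m = real n + \<beta>"
  define l where "l = a * x / (1 + x)"
  have m1: "m \<ge> 1" and nm: "1 \<le> real n" "real n \<le> m" using n \<beta> by (simp_all add: m_def)
  have "a * (x / (1 + x)) \<le> a * 1" using a x by (intro mult_left_mono) auto
  then have l: "0 \<le> l" "l \<le> a" using a x by (simp_all add: l_def)
  define c where "c = 2 + 12 * (l - \<beta> * x)\<^sup>2 / m + 4 * (\<beta> + 1)\<^sup>2 + 108 * (\<beta> + 1) ^ 4 / m ^ 4 + 4 * x ^ 4"
  define u where "u i = c + 12 / m * (real i - real n * x)\<^sup>2 + 108 / m ^ 4 * real i ^ 4" for i
  define v where "v j = 12 / m * (real j - l)\<^sup>2 + 108 / m ^ 4 * real j ^ 4" for j
  define U where "U = c + 12 / m * (real n * x * (1 + x))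
    + 108 / m ^ 4 * (pochhammer (real n) 4 * x ^ 4 + 6 * pochhammer (real n) 3 * x ^ 3
        + 7 * pochhammer (real n) 2 * x\<^sup>2 + real n * x)"
  define V where "V = 12 / m * l + 108 / m ^ 4 * (l ^ 4 + 6 * l ^ 3 + 7 * l\<^sup>2 + l)"
  have "(\<lambda>i. negbin_weight n x i * u i) sums U"
    unfolding u_def U_def by (rule negbin_expectation_quartic[OF x])
  moreover have "(\<lambda>j. poisson_weight l j * v j) sums V"
    unfolding v_def V_def by (rule poisson_expectation_quartic)
  moreover have "c \<ge> 0" using m1 by (simp add: c_def)
  then have "u i \<ge> 0" "v j \<ge> 0" "cell_bound \<beta> m x k \<ge> 0" for i j k
    using m1 cell_bound_nonneg[of m] by (simp_all add: u_def v_def)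
  moreover have "cell_bound \<beta> m x (i + j) \<le> u i + v j" for i j
    using cell_bound_add_le[OF m_def] m1 by (simp add: u_def v_def c_def add.assoc)
  ultimately have "summable (\<lambda>k. W_basis n k a x * cell_bound \<beta> m x k)"
    and "(\<Sum>k. W_basis n k a x * cell_bound \<beta> m x k) \<le> U + V"
    using W_basis_expectation_le[OF x a, of n u U v V "cell_bound \<beta> m x"] by (simp_all add: l_def)
  moreover have "U + V \<le> cell_moment_const a \<beta> * (1 + x\<^sup>2)\<^sup>2"
    using cell_const_terms_le[OF m1 l, of \<beta> x] negbin_cell_terms_le[OF nm x]
      poisson_cell_terms_le[OF m1 l] cell_moment_polynomial_le[OF a x, of \<beta>]
    unfolding U_def V_def c_def by linarith
  ultimately show "summable (\<lambda>k. W_basis n k a x * cell_bound \<beta> (real n + \<beta>) x k)"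
    "(\<Sum>k. W_basis n k a x * cell_bound \<beta> (real n + \<beta>) x k) \<le> cell_moment_const a \<beta> * (1 + x\<^sup>2)\<^sup>2"
    by (simp_all add: m_def)
qed

lemma T_op_diff_le:
  fixes f :: "real \<Rightarrow> real" and D :: "nat \<Rightarrow> real"
  assumes x: "x \<ge> 0" and a: "a \<ge> 0" and m: "real n + \<beta> > 0"
    and D: "\<And>k. \<bar>(real n + \<beta>) * integral {(real k + \<alpha>) / (real n + \<beta>) .. (real k + \<alpha> + 1) / (real n + \<beta>)} f
                - f x\<bar> \<le> D k"
    and summable: "summable (\<lambda>k. W_basis n k a x * D k)"
  shows "\<bar>T_op n a \<alpha> \<beta> f x - f x\<bar> \<le> (\<Sum>k. W_basis n k a x * D k)"
proof -
  define w where "w k = W_basis n k a x" for k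
  define I where "I k = integral {(real k + \<alpha>) / (real n + \<beta>) .. (real k + \<alpha> + 1) / (real n + \<beta>)} f" for k
  define g where "g k = (real n + \<beta>) * I k - f x" for k
  have w0: "w k \<ge> 0" for k using W_basis_nonneg[OF x a] by (simp add: w_def)
  have ws: "w sums 1" using W_basis_sums_one[OF x a] by (simp add: w_def[abs_def])
  have wg: "norm (w k * g k) \<le> w k * D k" for k
  proof -
    have "norm (w k * g k) = w k * \<bar>g k\<bar>" using w0 by (simp add: abs_mult)
    then show ?thesis using mult_left_mono[OF D w0] by (simp add: g_def I_def)
  qed
  have sg: "summable (\<lambda>k. norm (w k * g k))"
    by (rule summable_comparison_test'[OF summable]) (use wg in \<open>simp add: w_def\<close>)
  define S where "S = (\<Sum>k. w k * g k)"
  have "(\<lambda>k. (w k * g k + w k * f x) / (real n + \<beta>)) sums ((S + 1 * f x) / (real n + \<beta>))"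
    unfolding S_def
    by (intro sums_divide sums_add summable_sums[OF summable_norm_cancel[OF sg]] sums_mult2[OF ws])
  moreover have "(w k * g k + w k * f x) / (real n + \<beta>) = w k * I k" for k
    using m by (simp add: g_def field_simps)
  ultimately have "(\<lambda>k. w k * I k) sums ((S + f x) / (real n + \<beta>))" by simp
  then have "T_op n a \<alpha> \<beta> f x = S + f x"
    unfolding T_op_def using m by (simp add: w_def I_def sums_iff)
  then have "\<bar>T_op n a \<alpha> \<beta> f x - f x\<bar> = norm S" by simp
  also have "\<dots> \<le> (\<Sum>k. norm (w k * g k))" unfolding S_def by (rule summable_norm[OF sg])
  also have "\<dots> \<le> (\<Sum>k. W_basis n k a x * D k)"
    by (rule suminf_le[OF _ sg summable]) (use wg in \<open>simp add: w_def\<close>)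
  finally show ?thesis .
qed

lemma T_op_weighted_error_le:
  fixes f :: "real \<Rightarrow> real" and n :: nat and a \<alpha> \<beta> x :: real
  assumes a: "a \<ge> 0" and \<alpha>: "0 \<le> \<alpha>" "\<alpha> \<le> \<beta>" and f: "f \<in> C_rho" and n: "n \<ge> 1" and x: "x \<ge> 0"
  shows "\<bar>T_op n a \<alpha> \<beta> f x - f x\<bar>
    \<le> 4 * cell_moment_const a \<beta> * Omega f (1 / sqrt (real n + \<beta>)) * (1 + x\<^sup>2) ^ 3"
proof -
  define m where "m = real n + \<beta>"
  have m1: "m \<ge> 1" using n \<alpha> by (simp add: m_def)
  define c where "c = 4 * Omega f (1 / sqrt m) * (1 + x\<^sup>2)"
  have c0: "c \<ge> 0" using Omega_nonneg[OF f] m1 by (simp add: c_def)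
  note moments = W_basis_cell_bound_le[OF n _ a x, of \<beta>, folded m_def]
  have "\<bar>T_op n a \<alpha> \<beta> f x - f x\<bar> \<le> (\<Sum>k. W_basis n k a x * (c * cell_bound \<beta> m x k))"
  proof (rule T_op_diff_le[OF x a])
    show "\<bar>(real n + \<beta>) * integral {(real k + \<alpha>) / (real n + \<beta>)..(real k + \<alpha> + 1) / (real n + \<beta>)} f
        - f x\<bar> \<le> c * cell_bound \<beta> m x k" for k
      unfolding m_def[symmetric] c_def using C_rho_diff_le_on_cell[OF f \<alpha> m1 x]
      by (intro cell_average_diff_le[OF f \<alpha>(1) m1]) (simp add: mult.assoc)
    show "summable (\<lambda>k. W_basis n k a x * (c * cell_bound \<beta> m x k))"
      using summable_mult[OF moments(1), of c] \<alpha> by (simp add: mult_ac)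
  qed (use m1 in \<open>simp add: m_def\<close>)
  also have "\<dots> = c * (\<Sum>k. W_basis n k a x * cell_bound \<beta> m x k)"
    using suminf_mult[OF moments(1), of c] \<alpha> by (simp add: mult_ac)
  also have "\<dots> \<le> c * (cell_moment_const a \<beta> * (1 + x\<^sup>2)\<^sup>2)"
    using moments(2) \<alpha> c0 by (intro mult_left_mono) simp_all
  finally show ?thesis by (simp add: c_def m_def power2_eq_square power3_eq_cube mult_ac)
qed

theorem theorem4p3:
  fixes a \<alpha> \<beta> :: real
  assumes "a \<ge> 0" and "0 \<le> \<alpha>" and "\<alpha> \<le> \<beta>"
  shows "\<exists>M>0. \<forall>f\<in>C_rho_k. \<forall>n::nat. n \<ge> 1 \<longrightarrow>
           (\<forall>x\<ge>0. \<bar>T_op n a \<alpha> \<beta> f x - f x\<bar> / (1 + x\<^sup>2) ^ 3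
                    \<le> M * Omega f (1 / sqrt (real n + \<beta>)))"
proof (intro exI[of _ "4 * cell_moment_const a \<beta>"] conjI ballI allI impI)
  show "4 * cell_moment_const a \<beta> > 0" using cell_moment_const_pos[OF assms(1)] by simp
  fix f :: "real \<Rightarrow> real" and n :: nat and x :: real
  assume "f \<in> C_rho_k" and n: "n \<ge> 1" and x: "x \<ge> 0"
  \<comment> \<open>only \<open>f \<in> C_rho\<close> is needed\<close>
  then have "f \<in> C_rho" by (simp add: C_rho_k_def)
  from T_op_weighted_error_le[OF assms this n x]
  show "\<bar>T_op n a \<alpha> \<beta> f x - f x\<bar> / (1 + x\<^sup>2) ^ 3
      \<le> 4 * cell_moment_const a \<beta> * Omega f (1 / sqrt (real n + \<beta>))"
    by (simp add: divide_le_eq add_pos_nonneg)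
qed

end
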